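(* In the setting below, suppose the execution is nonempty, its last transition belongs to a committed block, and no pair of consecutive transitions is swappable. Then every block is committed and every block is interference-free, i.e. the transitions of each block occupy a contiguous segment $t_i,t_{i+1},\dots,t_j$ of the execution.
   Context: **Setting.** An execution is a finite sequence $t_1,\dots,t_n$ of pairwise distinct transitions, with execution order $t_i<_E t_j$ iff $i<j$. - **Blocks.** The transitions are partitioned into blocks, and $\mathsf{block}(t)$ denotes the block containing $t$. Each block is either committed or uncommitted. - **Labels.** Each transition $t$ has a label $\mathit{label}(t)\in\{\mathbf R,\mathbf N,\mathbf L\}$. Every committed block contains exactly one transition labelled $\mathbf N$, called its commit transition; transitions of that block occurring before it (in $<_E$) are labelled $\mathbf R$, and those occurring after it are labelled $\mathbf L$. Every transition of an uncommitted block is labelled $\mathbf R$. - **Commit.** For $t$ in a committed block, $\mathsf{commit}(t)$ denotes the commit transition of $\mathsf{block}(t)$. - **Order on uncommitted blocks.** $<_O$ is a fixed strict total order on the uncommitted blocks. **Swappable pairs.** Two transitions $t_A=t_i$ and $t_B=t_{i+1}$ that are consecutive in the execution are swappable iff one of the following holds: 1. $t_A$ is in an uncommitted block and $t_B$ is in a committed block; 2. both are in committed blocks and $\mathsf{commit}(t_B)<_E\mathsf{commit}(t_A)$; 3. both are in uncommitted blocks and $\mathsf{block}(t_B)<_O\mathsf{block}(t_A)$. *)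

theory Defs
  imports Main
begin

text \<open>An execution is a list E of pairwise distinct transitions (of type 'a).
  blk maps each transition to its block (of type 'b); the blocks are the
  values of blk on set E. committed says whether a block is committed;
  label gives the label of a transition; ordO is the order on uncommitted blocks.\<close>

datatype lab = R | N | L

definition exec_before :: "'a list \<Rightarrow> 'a \<Rightarrow> 'a \<Rightarrow> bool" where
  "exec_before E x y \<longleftrightarrow> (\<exists>i j. i < j \<and> j < length E \<and> E ! i = x \<and> E ! j = y)"

definition commit_of :: "'a list \<Rightarrow> ('a \<Rightarrow> 'b) \<Rightarrow> ('a \<Rightarrow> lab) \<Rightarrow> 'a \<Rightarrow> 'a" where
  "commit_of E blk label t = (THE c. c \<in> set E \<and> blk c = blk t \<and> label c = N)"

definition well_labelled ::
  "'a list \<Rightarrow> ('a \<Rightarrow> 'b) \<Rightarrow> ('b \<Rightarrow> bool) \<Rightarrow> ('a \<Rightarrow> lab) \<Rightarrow> bool" where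
  "well_labelled E blk committed label \<longleftrightarrow>
     (\<forall>t\<in>set E. \<not> committed (blk t) \<longrightarrow> label t = R) \<and>
     (\<forall>b\<in>blk ` set E. committed b \<longrightarrow>
        (\<exists>!c. c \<in> set E \<and> blk c = b \<and> label c = N) \<and>
        (\<forall>c\<in>set E. blk c = b \<and> label c = N \<longrightarrow>
           (\<forall>t\<in>set E. blk t = b \<longrightarrow>
              (exec_before E t c \<longrightarrow> label t = R) \<and>
              (exec_before E c t \<longrightarrow> label t = L))))"

definition strict_total_on :: "'b set \<Rightarrow> ('b \<Rightarrow> 'b \<Rightarrow> bool) \<Rightarrow> bool" where
  "strict_total_on U r \<longleftrightarrow>
     (\<forall>x\<in>U. \<not> r x x) \<and>
     (\<forall>x\<in>U. \<forall>y\<in>U. \<forall>z\<in>U. r x y \<and> r y z \<longrightarrow> r x z) \<and>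
     (\<forall>x\<in>U. \<forall>y\<in>U. x \<noteq> y \<longrightarrow> r x y \<or> r y x)"

definition swappable ::
  "'a list \<Rightarrow> ('a \<Rightarrow> 'b) \<Rightarrow> ('b \<Rightarrow> bool) \<Rightarrow> ('a \<Rightarrow> lab) \<Rightarrow> ('b \<Rightarrow> 'b \<Rightarrow> bool) \<Rightarrow> nat \<Rightarrow> bool" where
  "swappable E blk committed label ordO i \<longleftrightarrow>
     Suc i < length E \<and>
     (let tA = E ! i; tB = E ! Suc i in
       (\<not> committed (blk tA) \<and> committed (blk tB)) \<or>
       (committed (blk tA) \<and> committed (blk tB) \<and>
          exec_before E (commit_of E blk label tB) (commit_of E blk label tA)) \<or>
       (\<not> committed (blk tA) \<and> \<not> committed (blk tB) \<and> ordO (blk tB) (blk tA)))"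

end

theory Submission
  imports Defs
begin

text \<open>If a transition lies in an uncommitted block, so does its successor, since otherwise the
  pair would be swappable by rule 1; as the last transition is committed, every block is.
  Rule 2 then says that, read along the execution, the commit transitions never move backwards
  in execution order. Two transitions of the same block share their commit transition, so every
  transition between them has that same commit transition and hence lies in the same block.\<close>

lemma exec_before_nth_iff:
  assumes "distinct E" "a < length E" "b < length E"
  shows "exec_before E (E ! a) (E ! b) \<longleftrightarrow> a < b"
  using assms by (auto simp: exec_before_def nth_eq_iff_index_eq)

lemma exec_beforeE:
  assumes "exec_before E x y"
  obtains a b where "a < b" "b < length E" "x = E ! a" "y = E ! b"
  using assms unfolding exec_before_def by auto

lemma exec_before_total:
  assumes "x \<in> set E" "y \<in> set E" "x \<noteq> y"
  shows "exec_before E x y \<or> exec_before E y x"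
proof -
  obtain a b where "a < length E" "b < length E" "x = E ! a" "y = E ! b"
    using assms(1,2) by (auto simp: in_set_conv_nth)
  with assms(3) have "a < b \<or> b < a"
    by (metis linorder_neqE_nat)
  with \<open>a < length E\<close> \<open>b < length E\<close> \<open>x = E ! a\<close> \<open>y = E ! b\<close> show ?thesis
    unfolding exec_before_def by blast
qed

lemma transp_exec_before:
  assumes "distinct E"
  shows "transp (exec_before E)"
proof (rule transpI)
  fix x y z
  assume "exec_before E x y" "exec_before E y z"
  from \<open>exec_before E x y\<close> obtain a b where "a < b" "b < length E" "x = E ! a" "y = E ! b"
    by (rule exec_beforeE)
  from \<open>exec_before E y z\<close> obtain b' c where "b' < c" "c < length E" "y = E ! b'" "z = E ! c"
    by (rule exec_beforeE)
  have "b' = b"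
    using assms \<open>b < length E\<close> \<open>b' < c\<close> \<open>c < length E\<close> \<open>y = E ! b\<close> \<open>y = E ! b'\<close>
    by (simp add: nth_eq_iff_index_eq)
  with \<open>a < b\<close> \<open>b' < c\<close> have "a < c"
    by simp
  with \<open>c < length E\<close> \<open>x = E ! a\<close> \<open>z = E ! c\<close> show "exec_before E x z"
    unfolding exec_before_def by blast
qed

lemma asymp_exec_before:
  assumes "distinct E"
  shows "asymp (exec_before E)"
proof (rule asympI)
  fix x y
  assume "exec_before E x y"
  then obtain a b where "a < b" "b < length E" "x = E ! a" "y = E ! b"
    by (rule exec_beforeE)
  with assms show "\<not> exec_before E y x"
    by (simp add: exec_before_nth_iff)
qed

lemma propagates_to_last:
  assumes "\<forall>i. Suc i < length xs \<longrightarrow> P (xs ! i) \<longrightarrow> P (xs ! Suc i)"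
    and "i < length xs" "P (xs ! i)"
  shows "P (last xs)"
proof -
  have "P (xs ! j)" if "i \<le> j" "j < length xs" for j
    using that
  proof (induction j rule: dec_induct)
    case base
    show ?case by fact
  next
    case (step j)
    with assms(1) show ?case by simp
  qed
  moreover have "xs \<noteq> []"
    using \<open>i < length xs\<close> by auto
  ultimately show ?thesis
    using \<open>i < length xs\<close> by (simp add: last_conv_nth)
qed

lemma sorted_wrt_nth_eq_between:
  assumes "sorted_wrt r xs" "antisymp r"
    and "i \<le> k" "k \<le> j" "j < length xs" "xs ! i = xs ! j"
  shows "xs ! k = xs ! i"
proof (cases "i = k \<or> k = j")
  case True
  with assms(6) show ?thesis by auto
next
  case False
  with assms(3,4) have "i < k" "k < j" by auto
  with assms(1,5) have "r (xs ! i) (xs ! k)" "r (xs ! k) (xs ! j)"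
    by (simp_all add: sorted_wrt_nth_less)
  with assms(6) have "r (xs ! i) (xs ! k)" "r (xs ! k) (xs ! i)"
    by simp_all
  then show ?thesis
    using antisympD[OF assms(2)] by metis
qed

lemma commit_of_in_block:
  assumes "well_labelled E blk committed label" "t \<in> set E" "committed (blk t)"
  shows "commit_of E blk label t \<in> set E" "blk (commit_of E blk label t) = blk t"
proof -
  have "\<exists>!c. c \<in> set E \<and> blk c = blk t \<and> label c = N"
    using assms unfolding well_labelled_def by blast
  from theI'[OF this] show "commit_of E blk label t \<in> set E" "blk (commit_of E blk label t) = blk t"
    unfolding commit_of_def by auto
qed

lemma commit_of_cong_blk:
  "blk t = blk t' \<Longrightarrow> commit_of E blk label t = commit_of E blk label t'"
  by (simp add: commit_of_def)

lemma all_committed_if_no_swappable: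
  assumes "E \<noteq> []" "committed (blk (last E))"
    and "\<forall>i. Suc i < length E \<longrightarrow> \<not> swappable E blk committed label ordO i"
  shows "\<forall>t\<in>set E. committed (blk t)"
proof
  fix t
  assume "t \<in> set E"
  then obtain i where "i < length E" "E ! i = t"
    by (auto simp: in_set_conv_nth)
  have "\<forall>i. Suc i < length E \<longrightarrow> \<not> committed (blk (E ! i)) \<longrightarrow> \<not> committed (blk (E ! Suc i))"
    using assms(3) by (auto simp: swappable_def Let_def)
  with \<open>i < length E\<close> \<open>E ! i = t\<close> assms(2) show "committed (blk t)"
    using propagates_to_last[where P = "\<lambda>t. \<not> committed (blk t)"] by blast
qed

lemma commits_sorted_if_no_swappable:
  assumes "distinct E" "well_labelled E blk committed label" "\<forall>t\<in>set E. committed (blk t)"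
    and "\<forall>i. Suc i < length E \<longrightarrow> \<not> swappable E blk committed label ordO i"
  shows "sorted_wrt (exec_before E)\<^sup>=\<^sup>= (map (commit_of E blk label) E)"
proof -
  have "transp (exec_before E)\<^sup>=\<^sup>="
    using transp_exec_before[OF assms(1)] by simp
  moreover have "(exec_before E)\<^sup>=\<^sup>= (commit_of E blk label (E ! i)) (commit_of E blk label (E ! Suc i))"
    if "Suc i < length E" for i
  proof -
    have "\<not> exec_before E (commit_of E blk label (E ! Suc i)) (commit_of E blk label (E ! i))"
      using assms(3,4) that by (auto simp: swappable_def Let_def)
    moreover have "commit_of E blk label (E ! i) \<in> set E" "commit_of E blk label (E ! Suc i) \<in> set E"
      using commit_of_in_block(1)[OF assms(2)] assms(3) that by auto
    ultimately show ?thesis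
      using exec_before_total by fastforce
  qed
  ultimately show ?thesis
    by (simp add: sorted_wrt_iff_nth_Suc_transp)
qed

theorem mainTheorem7:
  fixes E :: "'a list" and blk :: "'a \<Rightarrow> 'b" and committed :: "'b \<Rightarrow> bool"
    and label :: "'a \<Rightarrow> lab" and ordO :: "'b \<Rightarrow> 'b \<Rightarrow> bool"
  assumes "distinct E"
    and "well_labelled E blk committed label"
    and "strict_total_on {b \<in> blk ` set E. \<not> committed b} ordO"
    and "E \<noteq> []"
    and "committed (blk (last E))"
    and "\<forall>i. Suc i < length E \<longrightarrow> \<not> swappable E blk committed label ordO i"
  shows "(\<forall>t\<in>set E. committed (blk t)) \<and>
         (\<forall>i j k. i \<le> k \<and> k \<le> j \<and> j < length E \<and> blk (E ! i) = blk (E ! j)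
              \<longrightarrow> blk (E ! k) = blk (E ! i))"
proof -
  have committed: "\<forall>t\<in>set E. committed (blk t)"
    using all_committed_if_no_swappable[OF assms(4,5,6)] .
  let ?cs = "map (commit_of E blk label) E"
  have sorted: "sorted_wrt (exec_before E)\<^sup>=\<^sup>= ?cs"
    using commits_sorted_if_no_swappable[OF assms(1,2) committed assms(6)] .
  have antisym: "antisymp (exec_before E)\<^sup>=\<^sup>="
    using asymp_exec_before[OF assms(1)] by (simp add: antisymp_on_if_asymp_on)
  have "blk (E ! k) = blk (E ! i)"
    if "i \<le> k" "k \<le> j" "j < length E" "blk (E ! i) = blk (E ! j)" for i j k
  proof -
    have "?cs ! i = ?cs ! j"
      using that commit_of_cong_blk[of blk "E ! i" "E ! j"] by simp
    then have "?cs ! k = ?cs ! i"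
      using sorted_wrt_nth_eq_between[OF sorted antisym] that by simp
    then have "blk (commit_of E blk label (E ! k)) = blk (commit_of E blk label (E ! i))"
      using that by simp
    with that committed show ?thesis
      by (simp add: commit_of_in_block(2)[OF assms(2)])
  qed
  with committed show ?thesis
    by blast
qed

end
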